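(* Let $a$ be a positive integer and let $k(a)$ be the least positive integer such that every Abelian group of order $k(a)$ is isomorphic to some product $\mathcal{G}_1\times\cdots\times\mathcal{G}_a$ of Abelian groups with $|\mathcal{G}_i|\geq 4$ for $i=1,\ldots,a$. If $G$ is a finite simple graph of arboricity at most $a$ containing no isolated edges, then ${\chi^\Sigma_g}^\star(G)\leq k(a)$.
   Context: The arboricity of $G$ is the least number of forests into which $E(G)$ can be decomposed; an isolated edge is a connected component isomorphic to $K_2$. For an Abelian group $\mathcal{G}$ with identity $0$ and $f\colon E(G)\to\mathcal{G}$, $w_f(v)=\sum_{u\in N(v)}f(uv)$. ${\chi^\Sigma_g}^\star(G)$ is the least positive integer $k$ such that for every Abelian group $\mathcal{G}$ of order $k$ there exists $f\colon E(G)\to\mathcal{G}\setminus\{0\}$ with $w_f(u)\neq w_f(v)$ for every edge $uv$. *)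

theory Defs
  imports "HOL-Algebra.Product_Groups" "HOL-Algebra.FiniteProduct"
begin

definition simple_graph :: "'v set \<Rightarrow> 'v set set \<Rightarrow> bool" where
  "simple_graph V E \<longleftrightarrow> finite V \<and>
     (\<forall>e\<in>E. \<exists>u v. u \<in> V \<and> v \<in> V \<and> u \<noteq> v \<and> e = {u, v})"

definition nbrs :: "'v set set \<Rightarrow> 'v \<Rightarrow> 'v set" where
  "nbrs E v = {u. {u, v} \<in> E}"

definition is_cycle :: "'v set set \<Rightarrow> 'v list \<Rightarrow> bool" where
  "is_cycle F vs \<longleftrightarrow> length vs \<ge> 3 \<and> distinct vs \<and>
     (\<forall>i < length vs. {vs ! i, vs ! ((i + 1) mod length vs)} \<in> F)"

definition forest_edges :: "'v set set \<Rightarrow> bool" where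
  "forest_edges F \<longleftrightarrow> \<not> (\<exists>vs. is_cycle F vs)"

definition arboricity :: "'v set set \<Rightarrow> nat" where
  "arboricity E = (LEAST n. \<exists>c :: 'v set \<Rightarrow> nat.
      (\<forall>e\<in>E. c e < n) \<and> (\<forall>i<n. forest_edges {e \<in> E. c e = i}))"

definition has_isolated_edge :: "'v set set \<Rightarrow> bool" where
  "has_isolated_edge E \<longleftrightarrow>
     (\<exists>u v. {u, v} \<in> E \<and> nbrs E u = {v} \<and> nbrs E v = {u})"

(* w_f(v) written multiplicatively in HOL-Algebra: identity = one G *)
definition weight :: "('g, 'c) monoid_scheme \<Rightarrow> 'v set set \<Rightarrow> ('v set \<Rightarrow> 'g) \<Rightarrow> 'v \<Rightarrow> 'g" where
  "weight G E f v = finprod G (\<lambda>u. f {u, v}) (nbrs E v)"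

definition good_labelling :: "('g, 'c) monoid_scheme \<Rightarrow> 'v set set \<Rightarrow> ('v set \<Rightarrow> 'g) \<Rightarrow> bool" where
  "good_labelling G E f \<longleftrightarrow>
     (\<forall>e\<in>E. f e \<in> carrier G - {\<one>\<^bsub>G\<^esub>}) \<and>
     (\<forall>u v. {u, v} \<in> E \<longrightarrow> weight G E f u \<noteq> weight G E f v)"

(* every Abelian group of order k (up to isomorphism, represented with carrier in nat) *)
definition group_sum_prop :: "'v set set \<Rightarrow> nat \<Rightarrow> bool" where
  "group_sum_prop E k \<longleftrightarrow>
     (\<forall>G :: nat monoid. comm_group G \<and> finite (carrier G) \<and> card (carrier G) = k
        \<longrightarrow> (\<exists>f. good_labelling G E f))"

definition chi_sigma_g_star :: "'v set set \<Rightarrow> nat" where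
  "chi_sigma_g_star E = (LEAST k. 0 < k \<and> group_sum_prop E k)"

definition decomposable_order :: "nat \<Rightarrow> nat \<Rightarrow> bool" where
  "decomposable_order a k \<longleftrightarrow>
     (\<forall>G :: nat monoid. comm_group G \<and> finite (carrier G) \<and> card (carrier G) = k
        \<longrightarrow> (\<exists>Gs :: nat \<Rightarrow> nat monoid.
               (\<forall>i<a. comm_group (Gs i) \<and> card (carrier (Gs i)) \<ge> 4) \<and>
               G \<cong> product_group {..<a} Gs))"

definition k_of :: "nat \<Rightarrow> nat" where
  "k_of a = (LEAST k. 0 < k \<and> decomposable_order a k)"

end

theory Submission
  imports Defs "HOL-Algebra.Sylow" "HOL-Algebra.Multiplicative_Group" "HOL-Library.Infinite_Set"
begin

(* Cover E by a forests. Each of them can be enlarged inside E to a forest without isolated edges: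
   an isolated edge of a forest is not isolated in E, and attaching a further edge of E to it
   closes no cycle. Every forest without isolated edges has a labelling by non-identity elements
   of an abelian group of order at least 4 under which adjacent vertices have distinct weights:
   take a vertex all of whose neighbours but one are leaves, remove these leaves, label the rest
   by induction and then choose the labels of the leaves. If G = G_1 x ... x G_a with |G_i| >= 4,
   give an edge the tuple whose i-th coordinate is its label in the i-th forest (the identity if
   it does not lie there); the i-th coordinate of a vertex weight is then its weight in the i-th
   forest, so the labelling is good. Finally k(a) exists: an abelian group whose order is a
   product of a distinct primes p_i >= 5 is the product of its p_i-torsion subgroups. *)

definition simple_edges :: "'v set set \<Rightarrow> bool" where
  "simple_edges H \<longleftrightarrow> (\<forall>e\<in>H. \<exists>u v. u \<noteq> v \<and> e = {u, v})"

lemma simple_edges_subset: "simple_edges H \<Longrightarrow> H' \<subseteq> H \<Longrightarrow> simple_edges H'"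
  unfolding simple_edges_def by blast

lemma simple_edges_neq: "simple_edges H \<Longrightarrow> {x, y} \<in> H \<Longrightarrow> x \<noteq> y"
  unfolding simple_edges_def by (metis doubleton_eq_iff insert_absorb2)

lemma finite_Union_simple_edges: "finite H \<Longrightarrow> simple_edges H \<Longrightarrow> finite (\<Union>H)"
  by (rule finite_Union) (auto simp: simple_edges_def)

lemma simple_graph_imp_simple_edges: "simple_graph V E \<Longrightarrow> simple_edges E"
  unfolding simple_graph_def simple_edges_def by blast

lemma simple_graph_imp_finite: "simple_graph V E \<Longrightarrow> finite E"
proof -
  assume "simple_graph V E"
  then have "finite V" "E \<subseteq> Pow V"
    unfolding simple_graph_def by auto
  then show "finite E"
    by (meson finite_Pow_iff finite_subset)
qed

lemma mem_nbrs [simp]: "u \<in> nbrs H v \<longleftrightarrow> {u, v} \<in> H"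
  unfolding nbrs_def by simp

lemma finite_nbrs: "finite H \<Longrightarrow> finite (nbrs H v)"
proof -
  assume "finite H"
  moreover have "inj_on (\<lambda>u. {u, v}) (nbrs H v)"
    by (auto intro!: inj_onI simp: doubleton_eq_iff)
  ultimately show ?thesis
    by (metis (no_types, lifting) finite_imageD finite_subset image_subset_iff mem_nbrs)
qed

section \<open>Forests\<close>

lemma forest_edges_subset: "forest_edges F \<Longrightarrow> F' \<subseteq> F \<Longrightarrow> forest_edges F'"
  unfolding forest_edges_def is_cycle_def by blast

lemma cycle_two_nbrs:
  assumes "is_cycle F vs" "x \<in> set vs"
  shows "\<exists>y z. y \<noteq> z \<and> y \<in> set vs \<and> z \<in> set vs \<and> y \<in> nbrs F x \<and> z \<in> nbrs F x"
proof -
  let ?n = "length vs"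
  obtain i where i: "i < ?n" "vs ! i = x"
    using assms(2) by (auto simp: in_set_conv_nth)
  have n3: "3 \<le> ?n" and dist: "distinct vs"
    and edge: "\<And>j. j < ?n \<Longrightarrow> {vs ! j, vs ! ((j + 1) mod ?n)} \<in> F"
    using assms(1) unfolding is_cycle_def by auto
  define pred where "pred = (if i = 0 then ?n - 1 else i - 1)"
  define succ where "succ = (i + 1) mod ?n"
  have pred: "pred < ?n" "(pred + 1) mod ?n = i"
    using n3 i(1) unfolding pred_def by auto
  have succ: "succ < ?n" "succ \<noteq> pred"
    using n3 i(1) unfolding succ_def pred_def by (auto simp: mod_if)
  have "vs ! succ \<noteq> vs ! pred"
    using dist succ pred(1) by (simp add: nth_eq_iff_index_eq)
  moreover have "vs ! succ \<in> nbrs F x" "vs ! pred \<in> nbrs F x"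
    using edge[OF i(1)] edge[OF pred(1)] i(2) pred(2) unfolding succ_def
    by (simp_all add: insert_commute)
  ultimately show ?thesis
    using succ(1) pred(1) by (meson nth_mem)
qed

lemma forest_edges_subsingleton:
  assumes "F \<subseteq> {e}"
  shows "forest_edges F"
  unfolding forest_edges_def
proof
  assume "\<exists>vs. is_cycle F vs"
  then obtain vs where c: "is_cycle F vs" by blast
  then have "vs \<noteq> []"
    unfolding is_cycle_def by auto
  then obtain y z where "y \<noteq> z" "{y, vs ! 0} \<in> F" "{z, vs ! 0} \<in> F"
    using cycle_two_nbrs[OF c, of "vs ! 0"] by auto
  then have "{y, vs ! 0} = {z, vs ! 0}"
    using assms by blast
  with \<open>y \<noteq> z\<close> show False
    by (auto simp: doubleton_eq_iff)
qed

lemma forest_edges_insert_at_isolated_edge: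
  assumes F: "forest_edges F" and "u \<noteq> v" "w \<noteq> v"
    and nu: "nbrs F u = {v}" and nv: "nbrs F v = {u}"
  shows "forest_edges (insert {w, u} F)"
  unfolding forest_edges_def
proof
  let ?F = "insert {w, u} F"
  assume "\<exists>vs. is_cycle ?F vs"
  then obtain vs where c: "is_cycle ?F vs" by blast
  have "{x, v} \<noteq> {w, u}" for x
    using \<open>u \<noteq> v\<close> \<open>w \<noteq> v\<close> by (auto simp: doubleton_eq_iff)
  then have "nbrs ?F v = {u}"
    using nv unfolding nbrs_def by auto
  then have "v \<notin> set vs"
    using cycle_two_nbrs[OF c, of v] by auto
  have "nbrs ?F u \<subseteq> {v, w}"
  proof
    fix x assume "x \<in> nbrs ?F u"
    then have "{x, u} = {w, u} \<or> x \<in> nbrs F u"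
      unfolding nbrs_def by auto
    then show "x \<in> {v, w}"
      using nu by (auto simp: doubleton_eq_iff)
  qed
  then have "u \<notin> set vs"
    using cycle_two_nbrs[OF c, of u] \<open>v \<notin> set vs\<close> by blast
  have "{vs ! i, vs ! ((i + 1) mod length vs)} \<in> F" if i: "i < length vs" for i
  proof -
    have "(i + 1) mod length vs < length vs"
      using i by (intro mod_less_divisor) linarith
    then have "vs ! i \<noteq> u" "vs ! ((i + 1) mod length vs) \<noteq> u"
      using i \<open>u \<notin> set vs\<close> nth_mem by metis+
    moreover have "{vs ! i, vs ! ((i + 1) mod length vs)} \<in> ?F"
      using c i unfolding is_cycle_def by blast
    ultimately show ?thesis
      by (auto simp: doubleton_eq_iff)
  qed
  then have "is_cycle F vs"
    using c unfolding is_cycle_def by blast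
  with F show False
    unfolding forest_edges_def by blast
qed

lemma ex_edge_attached_to_isolated_edge:
  assumes simple: "simple_edges E" and no_iso: "\<not> has_isolated_edge E"
    and "F \<subseteq> E" and forest: "forest_edges F" and "has_isolated_edge F"
  shows "\<exists>e \<in> E - F. forest_edges (insert e F)"
proof -
  obtain u v where uv: "{u, v} \<in> F" and nu: "nbrs F u = {v}" and nv: "nbrs F v = {u}"
    using \<open>has_isolated_edge F\<close> unfolding has_isolated_edge_def by blast
  have "{u, v} \<in> E"
    using uv \<open>F \<subseteq> E\<close> by blast
  then have "nbrs E u \<noteq> {v} \<or> nbrs E v \<noteq> {u}"
    using no_iso unfolding has_isolated_edge_def by blast
  moreover have "u \<noteq> v"
    using simple_edges_neq[OF simple \<open>{u, v} \<in> E\<close>] .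
  ultimately obtain x y w where xy: "x \<noteq> y" "nbrs F x = {y}" "nbrs F y = {x}"
    and w: "{w, x} \<in> E" "w \<noteq> y"
  proof (elim disjE)
    assume "nbrs E u \<noteq> {v}"
    moreover have "v \<in> nbrs E u"
      using \<open>{u, v} \<in> E\<close> by (simp add: insert_commute)
    ultimately obtain w where "w \<in> nbrs E u" "w \<noteq> v" by blast
    then show thesis
      using that[of u v w] \<open>u \<noteq> v\<close> nu nv by simp
  next
    assume "nbrs E v \<noteq> {u}"
    moreover have "u \<in> nbrs E v"
      using \<open>{u, v} \<in> E\<close> by simp
    ultimately obtain w where "w \<in> nbrs E v" "w \<noteq> u" by blast
    then show thesis
      using that[of v u w] \<open>u \<noteq> v\<close> nu nv by simp
  qed
  have "w \<notin> nbrs F x"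
    using xy(2) w(2) by blast
  then have "{w, x} \<in> E - F"
    using w(1) by simp
  moreover have "forest_edges (insert {w, x} F)"
    using forest_edges_insert_at_isolated_edge[OF forest xy(1) w(2) xy(2,3)] .
  ultimately show ?thesis
    by blast
qed

lemma forest_extend_no_isolated_edge:
  assumes fin: "finite E" and simple: "simple_edges E" and no_iso: "\<not> has_isolated_edge E"
  shows "F \<subseteq> E \<Longrightarrow> forest_edges F \<Longrightarrow>
    \<exists>H. F \<subseteq> H \<and> H \<subseteq> E \<and> forest_edges H \<and> \<not> has_isolated_edge H"
proof (induction "card (E - F)" arbitrary: F rule: less_induct)
  case less
  show ?case
  proof (cases "has_isolated_edge F")
    case False
    then show ?thesis using less.prems by blast
  next
    case True
    then obtain e where e: "e \<in> E - F" "forest_edges (insert e F)"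
      using ex_edge_attached_to_isolated_edge[OF simple no_iso less.prems] by blast
    then have "card (E - F - {e}) < card (E - F)"
      using fin by (intro card_Diff1_less) auto
    moreover have "E - insert e F = E - F - {e}"
      by blast
    ultimately have "card (E - insert e F) < card (E - F)"
      by simp
    moreover have "insert e F \<subseteq> E"
      using less.prems(1) e(1) by blast
    ultimately have "\<exists>H. insert e F \<subseteq> H \<and> H \<subseteq> E \<and> forest_edges H \<and> \<not> has_isolated_edge H"
      using e(2) by (rule less.hyps)
    then show ?thesis
      by (meson insert_subset)
  qed
qed

lemma arboricity_decomposition:
  assumes "finite E"
  shows "\<exists>c. (\<forall>e\<in>E. c e < arboricity E) \<and> (\<forall>i. forest_edges {e \<in> E. c e = i})"
proof -
  let ?P = "\<lambda>n. \<exists>c :: 'a set \<Rightarrow> nat. (\<forall>e\<in>E. c e < n) \<and> (\<forall>i<n. forest_edges {e \<in> E. c e = i})"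
  obtain f where f: "bij_betw f E {0..<card E}"
    using ex_bij_betw_finite_nat[OF assms] by blast
  have "?P (card E)"
  proof (intro exI[of _ f] conjI ballI allI impI)
    show "f e < card E" if "e \<in> E" for e
      using f that by (auto simp: bij_betw_def)
    show "forest_edges {e \<in> E. f e = i}" for i
      using f by (intro forest_edges_subsingleton[of _ "inv_into E f i"]) (auto simp: bij_betw_def)
  qed
  then have "?P (arboricity E)"
    unfolding arboricity_def by (rule LeastI)
  then obtain c where c: "\<forall>e\<in>E. c e < arboricity E" "\<forall>i<arboricity E. forest_edges {e \<in> E. c e = i}"
    by blast
  moreover have "forest_edges {e \<in> E. c e = i}" if "\<not> i < arboricity E" for i
  proof -
    have "{e \<in> E. c e = i} = {}"
      using c(1) that by auto
    then show ?thesis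
      by (metis forest_edges_subsingleton empty_subsetI)
  qed
  ultimately show ?thesis
    by blast
qed

lemma forest_cover_no_isolated_edge:
  assumes "finite E" "simple_edges E" "\<not> has_isolated_edge E" "arboricity E \<le> a"
  shows "\<exists>H. (\<forall>i<a. H i \<subseteq> E \<and> forest_edges (H i) \<and> \<not> has_isolated_edge (H i)) \<and>
             (\<forall>e\<in>E. \<exists>i<a. e \<in> H i)"
proof -
  obtain c where c: "\<forall>e\<in>E. c e < arboricity E" "\<forall>i. forest_edges {e \<in> E. c e = i}"
    using arboricity_decomposition[OF assms(1)] by blast
  have "\<forall>i. \<exists>H. {e \<in> E. c e = i} \<subseteq> H \<and> H \<subseteq> E \<and> forest_edges H \<and> \<not> has_isolated_edge H"
    using forest_extend_no_isolated_edge[OF assms(1-3) _ c(2)[rule_format]] by simp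
  from choice[OF this] obtain H where
    H: "\<forall>i. {e \<in> E. c e = i} \<subseteq> H i \<and> H i \<subseteq> E \<and> forest_edges (H i) \<and> \<not> has_isolated_edge (H i)"
    by blast
  have "\<exists>i<a. e \<in> H i" if "e \<in> E" for e
  proof (intro exI conjI)
    show "c e < a"
      using c(1) assms(4) that by fastforce
    show "e \<in> H (c e)"
      using H that by blast
  qed
  with H show ?thesis
    by blast
qed

definition is_path :: "'v set \<Rightarrow> 'v set set \<Rightarrow> 'v list \<Rightarrow> bool" where
  "is_path X H vs \<longleftrightarrow> vs \<noteq> [] \<and> distinct vs \<and> set vs \<subseteq> X \<and>
     (\<forall>i. Suc i < length vs \<longrightarrow> {vs ! i, vs ! Suc i} \<in> H)"

lemma ex_longest_path:
  assumes "finite X" "x0 \<in> X"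
  shows "\<exists>vs. is_path X H vs \<and> (\<forall>ws. is_path X H ws \<longrightarrow> length ws \<le> length vs)"
proof -
  have "is_path X H [x0]"
    using assms(2) unfolding is_path_def by simp
  moreover have "length vs < Suc (card X)" if "is_path X H vs" for vs
  proof -
    have "distinct vs" "set vs \<subseteq> X"
      using that unfolding is_path_def by auto
    then have "length vs \<le> card X"
      using assms(1) by (metis card_mono distinct_card)
    then show ?thesis
      by simp
  qed
  ultimately show ?thesis
    using ex_has_greatest_nat[of "is_path X H" "[x0]" length "Suc (card X)"] by blast
qed

lemma is_cycle_take_path:
  assumes path: "is_path X H vs" and m: "2 \<le> m" "m < length vs" "vs ! m \<in> nbrs H (vs ! 0)"
  shows "is_cycle H (take (Suc m) vs)"
  unfolding is_cycle_def
proof (intro conjI allI impI)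
  let ?c = "take (Suc m) vs"
  show "3 \<le> length ?c" "distinct ?c"
    using m path unfolding is_path_def by auto
  fix i assume "i < length ?c"
  then consider "i = m" | "i < m"
    using m by fastforce
  then show "{?c ! i, ?c ! ((i + 1) mod length ?c)} \<in> H"
  proof cases
    case 1
    then show ?thesis
      using m by (simp add: insert_commute)
  next
    case 2
    then show ?thesis
      using m path unfolding is_path_def by simp
  qed
qed

text \<open>Both neighbours in \<open>X\<close> of the first vertex of a longest path in \<open>X\<close> lie on the path, and
  the one farther along closes a cycle.\<close>

lemma cycle_if_two_nbrs_within:
  assumes fin: "finite X" and "x0 \<in> X" and simple: "simple_edges H"
    and two_nbrs: "\<And>x. x \<in> X \<Longrightarrow> \<exists>y z. y \<noteq> z \<and> y \<in> X \<and> z \<in> X \<and> y \<in> nbrs H x \<and> z \<in> nbrs H x"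
  shows "\<exists>vs. is_cycle H vs"
proof -
  obtain vs where path: "is_path X H vs"
    and longest: "\<And>ws. is_path X H ws \<Longrightarrow> length ws \<le> length vs"
    using ex_longest_path[OF fin \<open>x0 \<in> X\<close>] by blast
  have "vs \<noteq> []" and dist: "distinct vs" and "set vs \<subseteq> X"
    and edge: "\<And>i. Suc i < length vs \<Longrightarrow> {vs ! i, vs ! Suc i} \<in> H"
    using path unfolding is_path_def by auto
  then have "vs ! 0 \<in> X"
    by auto
  have on_path: "t \<in> set vs" if "t \<in> X" "t \<in> nbrs H (vs ! 0)" for t
  proof (rule ccontr)
    assume "t \<notin> set vs"
    have "is_path X H (t # vs)"
      unfolding is_path_def
    proof (intro conjI allI impI)
      show "distinct (t # vs)" "set (t # vs) \<subseteq> X"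
        using \<open>t \<notin> set vs\<close> dist \<open>set vs \<subseteq> X\<close> that(1) by auto
      show "{(t # vs) ! i, (t # vs) ! Suc i} \<in> H" if "Suc i < length (t # vs)" for i
        using that \<open>t \<in> nbrs H (vs ! 0)\<close> edge by (cases i) auto
    qed simp
    from longest[OF this] show False
      by simp
  qed
  obtain y z where "y \<noteq> z" "y \<in> nbrs H (vs ! 0)" "z \<in> nbrs H (vs ! 0)" "y \<in> set vs" "z \<in> set vs"
    using two_nbrs[OF \<open>vs ! 0 \<in> X\<close>] on_path by blast
  moreover have "vs ! 0 \<notin> nbrs H (vs ! 0)"
    using simple_edges_neq[OF simple, of "vs ! 0" "vs ! 0"] by auto
  ultimately obtain j k where jk: "j \<noteq> k" "j \<noteq> 0" "k \<noteq> 0" "j < length vs" "k < length vs"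
    "vs ! j \<in> nbrs H (vs ! 0)" "vs ! k \<in> nbrs H (vs ! 0)"
    by (metis in_set_conv_nth)
  then have "is_cycle H (take (Suc (max j k)) vs)"
    by (intro is_cycle_take_path[OF path]) (auto simp: max_def)
  then show ?thesis
    by blast
qed

text \<open>Otherwise every vertex of degree at least two has two neighbours of degree at least two,
  and these vertices carry a cycle.\<close>

lemma forest_penultimate_vertex:
  assumes fin: "finite H" and simple: "simple_edges H" and forest: "forest_edges H"
    and "y \<noteq> z" "y \<in> nbrs H x" "z \<in> nbrs H x"
  shows "\<exists>p q. q \<in> nbrs H p \<and> nbrs H p - {q} \<noteq> {} \<and> (\<forall>c\<in>nbrs H p - {q}. nbrs H c = {p})"
proof (rule ccontr)
  assume "\<not> ?thesis"
  then have no_star: "\<exists>c\<in>nbrs H p - {q}. nbrs H c \<noteq> {p}"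
    if "q \<in> nbrs H p" "nbrs H p - {q} \<noteq> {}" for p q
    using that by blast
  define X where "X = {x. \<exists>y z. y \<noteq> z \<and> y \<in> nbrs H x \<and> z \<in> nbrs H x}"
  have "X \<subseteq> \<Union>H"
    unfolding X_def by (auto simp del: mem_nbrs simp: nbrs_def)
  then have "finite X"
    using finite_Union_simple_edges[OF fin simple] finite_subset by blast
  moreover have "x \<in> X"
    unfolding X_def using assms(4-6) by blast
  moreover have "\<exists>y z. y \<noteq> z \<and> y \<in> X \<and> z \<in> X \<and> y \<in> nbrs H x \<and> z \<in> nbrs H x"
    if "x \<in> X" for x
  proof -
    have inner: "\<exists>c\<in>nbrs H x - {q}. c \<in> X" if q: "q \<in> nbrs H x" "nbrs H x - {q} \<noteq> {}" for q
    proof -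
      obtain c where c: "c \<in> nbrs H x - {q}" "nbrs H c \<noteq> {x}"
        using no_star[OF q] by blast
      moreover have "x \<in> nbrs H c"
        using c(1) by (simp add: insert_commute)
      ultimately obtain w where "w \<in> nbrs H c" "w \<noteq> x"
        by blast
      with \<open>x \<in> nbrs H c\<close> have "c \<in> X"
        unfolding X_def by blast
      with c(1) show ?thesis
        by blast
    qed
    obtain a b where ab: "a \<noteq> b" "a \<in> nbrs H x" "b \<in> nbrs H x"
      using \<open>x \<in> X\<close> unfolding X_def by blast
    then have "b \<in> nbrs H x - {a}"
      by blast
    then obtain y where y: "y \<in> nbrs H x - {a}" "y \<in> X"
      using inner[OF ab(2)] by blast
    then have "a \<in> nbrs H x - {y}"
      using ab(2) by blast
    then obtain z where "z \<in> nbrs H x - {y}" "z \<in> X"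
      using inner[of y] y(1) by blast
    with y show ?thesis
      by blast
  qed
  ultimately obtain vs where "is_cycle H vs"
    using cycle_if_two_nbrs_within[OF _ _ simple] by blast
  with forest show False
    unfolding forest_edges_def by blast
qed

lemma nbrs_attach_leaves:
  assumes p: "nbrs H p = {q}" and leaves: "\<And>c. c \<in> L \<Longrightarrow> nbrs H c = {}"
  shows "nbrs (H \<union> (\<lambda>c. {c, p}) ` L) p = insert q L"
    and "c \<in> L \<Longrightarrow> nbrs (H \<union> (\<lambda>c. {c, p}) ` L) c = {p}"
    and "y \<notin> insert p L \<Longrightarrow> nbrs (H \<union> (\<lambda>c. {c, p}) ` L) y = nbrs H y"
proof -
  let ?H = "H \<union> (\<lambda>c. {c, p}) ` L"
  have star: "{x, y} \<in> (\<lambda>c. {c, p}) ` L \<longleftrightarrow> (x \<in> L \<and> y = p) \<or> (y \<in> L \<and> x = p)" for x y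
    by (auto simp: doubleton_eq_iff)
  have nbrs_un: "nbrs ?H y = nbrs H y \<union> {x. (x \<in> L \<and> y = p) \<or> (y \<in> L \<and> x = p)}" for y
    unfolding nbrs_def using star by auto
  have "p \<notin> L"
    using p leaves by force
  then show "nbrs ?H p = insert q L"
    unfolding nbrs_un p by auto
  show "nbrs ?H c = {p}" if "c \<in> L"
    unfolding nbrs_un leaves[OF that] using that \<open>p \<notin> L\<close> by auto
  show "nbrs ?H y = nbrs H y" if "y \<notin> insert p L"
    unfolding nbrs_un using that by auto
qed

lemma nbrs_detach_leaves:
  assumes simple: "simple_edges H" and p: "nbrs H p = insert q L" "q \<notin> L"
    and leaves: "\<And>c. c \<in> L \<Longrightarrow> nbrs H c = {p}"
  shows "H = (H - (\<lambda>c. {c, p}) ` L) \<union> (\<lambda>c. {c, p}) ` L"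
    and "nbrs (H - (\<lambda>c. {c, p}) ` L) p = {q}"
    and "c \<in> L \<Longrightarrow> nbrs (H - (\<lambda>c. {c, p}) ` L) c = {}"
proof -
  let ?S = "(\<lambda>c. {c, p}) ` L"
  have star: "{x, y} \<in> ?S \<longleftrightarrow> (x \<in> L \<and> y = p) \<or> (y \<in> L \<and> x = p)" for x y
    by (auto simp: doubleton_eq_iff)
  have nbrs_diff: "nbrs (H - ?S) y = nbrs H y - {x. (x \<in> L \<and> y = p) \<or> (y \<in> L \<and> x = p)}" for y
    unfolding nbrs_def using star by auto
  have "p \<notin> nbrs H p"
    using simple_edges_neq[OF simple, of p p] by auto
  then have "p \<notin> L"
    using p(1) by blast
  have "c \<in> nbrs H p" if "c \<in> L" for c
    using that p(1) by blast
  then have "?S \<subseteq> H"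
    by auto
  then show "H = (H - ?S) \<union> ?S"
    by blast
  show "nbrs (H - ?S) p = {q}"
    unfolding nbrs_diff p(1) using p(2) \<open>p \<notin> L\<close> by auto
  show "nbrs (H - ?S) c = {}" if "c \<in> L"
    unfolding nbrs_diff leaves[OF that] using that by auto
qed

section \<open>Labellings of forests\<close>

text \<open>Stripping leaves can create isolated edges, whose two end weights no labelling separates; the
  induction over forests therefore only separates the remaining edges.\<close>

definition almost_good_labelling ::
    "('g, 'c) monoid_scheme \<Rightarrow> 'v set set \<Rightarrow> ('v set \<Rightarrow> 'g) \<Rightarrow> bool" where
  "almost_good_labelling G H h \<longleftrightarrow>
     (\<forall>e\<in>H. h e \<in> carrier G - {\<one>\<^bsub>G\<^esub>}) \<and>
     (\<forall>u v. {u, v} \<in> H \<longrightarrow> \<not> (nbrs H u = {v} \<and> nbrs H v = {u}) \<longrightarrow>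
        weight G H h u \<noteq> weight G H h v)"

lemma good_labelling_if_almost_good:
  "\<not> has_isolated_edge H \<Longrightarrow> almost_good_labelling G H h \<Longrightarrow> good_labelling G H h"
  unfolding has_isolated_edge_def almost_good_labelling_def good_labelling_def by blast

lemma ex_avoiding_three:
  assumes "finite A" "4 \<le> card A"
  shows "\<exists>w\<in>A. w \<noteq> x \<and> w \<noteq> y \<and> w \<noteq> z"
proof (rule ccontr)
  assume "\<not> ?thesis"
  then have "A \<subseteq> {x, y, z}"
    by blast
  then have "card A \<le> card {x, y, z}"
    by (simp add: card_mono)
  also have "\<dots> \<le> 3"
    by (simp add: card_insert_if)
  finally show False
    using assms(2) by simp
qed

context comm_group
begin

lemma weight_closed:
  "(\<And>u. u \<in> nbrs H v \<Longrightarrow> h {u, v} \<in> carrier G) \<Longrightarrow> weight G H h v \<in> carrier G"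
  unfolding weight_def by (intro finprod_closed) blast

text \<open>If \<open>a \<otimes> g [^] n = \<one>\<close> held for \<open>g = u\<close>, \<open>g = v\<close> and \<open>g = u \<otimes> v\<close>, then \<open>v [^] n = \<one>\<close>
  and hence \<open>a = \<one>\<close>.\<close>

lemma ex_nontrivial_shifted_pow:
  fixes n :: nat
  assumes "finite (carrier G)" "4 \<le> card (carrier G)" "a \<in> carrier G" "a \<noteq> \<one>"
  shows "\<exists>g\<in>carrier G. g \<noteq> \<one> \<and> a \<otimes> g [^] n \<noteq> \<one>"
proof (rule ccontr)
  assume "\<not> ?thesis"
  then have shift: "a \<otimes> g [^] n = \<one>" if "g \<in> carrier G" "g \<noteq> \<one>" for g
    using that by blast
  obtain u where u: "u \<in> carrier G" "u \<noteq> \<one>"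
    using ex_avoiding_three[OF assms(1,2), of \<one> \<one> \<one>] by blast
  obtain v where v: "v \<in> carrier G" "v \<noteq> \<one>" "v \<noteq> inv u"
    using ex_avoiding_three[OF assms(1,2), of \<one> "inv u" \<one>] by blast
  have "u \<otimes> v \<noteq> \<one>"
  proof
    assume "u \<otimes> v = \<one>"
    then have "inv u = v"
      using inv_equality[of v u] m_comm[of u v] u v by simp
    with v show False
      by simp
  qed
  moreover have "(u \<otimes> v) [^] n = u [^] n \<otimes> v [^] n"
    using u v by (intro pow_mult_distrib m_comm)
  ultimately have "(a \<otimes> u [^] n) \<otimes> v [^] n = \<one>"
    using shift[of "u \<otimes> v"] u v assms(3) by (simp add: m_assoc)
  then have "v [^] n = \<one>"
    using shift[OF u] v by simp
  then show False
    using shift[OF v(1,2)] assms(3,4) by simp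
qed

text \<open>The leaf \<open>c0\<close> gets a label \<open>h\<close> and all other leaves a common label \<open>g\<close>; choosing \<open>g\<close> first
  makes the factor \<open>c = a \<otimes> g [^] (card L - 1)\<close> nontrivial, and then \<open>h\<close> only has to avoid three
  values.\<close>

lemma star_labelling:
  assumes fin: "finite (carrier G)" "4 \<le> card (carrier G)"
    and a: "a \<in> carrier G" "a \<noteq> \<one>" and B: "B \<in> carrier G"
    and L: "finite L" "c0 \<in> L"
  shows "\<exists>x \<in> L \<rightarrow> carrier G - {\<one>}. a \<otimes> finprod G x L \<noteq> B \<and> (\<forall>c\<in>L. a \<otimes> finprod G x L \<noteq> x c)"
proof -
  obtain g where g: "g \<in> carrier G" "g \<noteq> \<one>" "a \<otimes> g [^] (card L - 1) \<noteq> \<one>"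
    using ex_nontrivial_shifted_pow[OF fin a] by blast
  define c where "c = a \<otimes> g [^] (card L - 1)"
  have c: "c \<in> carrier G" "c \<noteq> \<one>"
    using g a unfolding c_def by auto
  obtain h where h: "h \<in> carrier G" "h \<noteq> \<one>" "h \<noteq> inv c \<otimes> B" "h \<noteq> inv c \<otimes> g"
    using ex_avoiding_three[OF fin, of \<one> "inv c \<otimes> B" "inv c \<otimes> g"] by blast
  define x where "x = (\<lambda>j. if j = c0 then h else g)"
  have x: "x \<in> L \<rightarrow> carrier G - {\<one>}"
    using h g unfolding x_def by auto
  have "finprod G x L = finprod G x (insert c0 (L - {c0}))"
    using L by (simp add: insert_absorb)
  also have "\<dots> = x c0 \<otimes> finprod G x (L - {c0})"
    using L x by (intro finprod_insert) auto
  also have "finprod G x (L - {c0}) = finprod G (\<lambda>_. g) (L - {c0})"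
    using g by (intro finprod_cong) (auto simp: x_def)
  also have "\<dots> = g [^] (card L - 1)"
    using L g by (simp add: finprod_const)
  finally have "finprod G x L = h \<otimes> g [^] (card L - 1)"
    by (simp add: x_def)
  then have prod: "a \<otimes> finprod G x L = c \<otimes> h"
    using a g h unfolding c_def by (simp add: m_ac)
  moreover have "c \<otimes> h \<noteq> B" "c \<otimes> h \<noteq> g"
    using c h B g inv_solve_left by metis+
  moreover have "c \<otimes> h \<noteq> h"
    using c h r_cancel_one by metis
  ultimately show ?thesis
    using x by (intro bexI[of _ x]) (auto simp: prod x_def)
qed

lemma almost_good_labelling_const:
  assumes "\<And>x y z. y \<in> nbrs H x \<Longrightarrow> z \<in> nbrs H x \<Longrightarrow> y = z"
    and "g \<in> carrier G" "g \<noteq> \<one>"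
  shows "almost_good_labelling G H (\<lambda>_. g)"
proof -
  have "nbrs H u = {v} \<and> nbrs H v = {u}" if "{u, v} \<in> H" for u v
  proof -
    have "v \<in> nbrs H u" "u \<in> nbrs H v"
      using that by (simp_all add: insert_commute)
    then show ?thesis
      using assms(1) by blast
  qed
  then show ?thesis
    using assms(2,3) unfolding almost_good_labelling_def by blast
qed

end

lemma attach_leaves_fresh:
  assumes p: "nbrs H p = {q}" and leaves: "\<And>c. c \<in> L \<Longrightarrow> nbrs H c = {}"
  shows "p \<notin> L" "q \<notin> L"
proof -
  have "q \<in> nbrs H p"
    using p by blast
  moreover from this have "p \<in> nbrs H q"
    by (simp add: insert_commute)
  ultimately show "p \<notin> L" "q \<notin> L"
    using leaves by blast+
qed

text \<open>The new edge \<open>{c, p}\<close> gets the label \<open>x c\<close>.\<close>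

definition attach_labels :: "'v set set \<Rightarrow> ('v set \<Rightarrow> 'g) \<Rightarrow> 'v \<Rightarrow> ('v \<Rightarrow> 'g) \<Rightarrow> 'v set \<Rightarrow> 'g" where
  "attach_labels H h p x e = (if e \<in> H then h e else x (the_elem (e - {p})))"

lemma attach_labels_new:
  assumes "nbrs H c = {}" "c \<noteq> p"
  shows "attach_labels H h p x {c, p} = x c" "attach_labels H h p x {p, c} = x c"
proof -
  have "p \<notin> nbrs H c"
    using assms(1) by blast
  then have "{c, p} \<notin> H"
    by (simp add: insert_commute)
  moreover have "{c, p} - {p} = {c}"
    using assms(2) by auto
  ultimately show "attach_labels H h p x {c, p} = x c" "attach_labels H h p x {p, c} = x c"
    unfolding attach_labels_def by (simp_all add: insert_commute)
qed

lemma attach_labels_mem: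
  assumes "\<And>e. e \<in> H \<Longrightarrow> h e \<in> A" "x \<in> L \<rightarrow> A" "\<And>c. c \<in> L \<Longrightarrow> nbrs H c = {}" "p \<notin> L"
    and e: "e \<in> H \<union> (\<lambda>c. {c, p}) ` L"
  shows "attach_labels H h p x e \<in> A"
proof (cases "e \<in> H")
  case True
  then show ?thesis
    using assms(1) unfolding attach_labels_def by simp
next
  case False
  then obtain c where c: "c \<in> L" "e = {c, p}"
    using e by blast
  then have "c \<noteq> p"
    using assms(4) by blast
  then have "attach_labels H h p x e = x c"
    using attach_labels_new(1)[OF assms(3)[OF c(1)]] c(2) by simp
  then show ?thesis
    using assms(2) c(1) by auto
qed

context comm_group
begin

lemma weight_attach_labels:
  assumes p: "nbrs H p = {q}" and leaves: "\<And>c. c \<in> L \<Longrightarrow> nbrs H c = {}" and "finite L"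
    and h: "\<And>e. e \<in> H \<Longrightarrow> h e \<in> carrier G" and x: "x \<in> L \<rightarrow> carrier G"
  shows "weight G (H \<union> (\<lambda>c. {c, p}) ` L) (attach_labels H h p x) p = h {q, p} \<otimes> finprod G x L"
    and "c \<in> L \<Longrightarrow> weight G (H \<union> (\<lambda>c. {c, p}) ` L) (attach_labels H h p x) c = x c"
    and "y \<notin> insert p L \<Longrightarrow>
      weight G (H \<union> (\<lambda>c. {c, p}) ` L) (attach_labels H h p x) y = weight G H h y"
proof -
  let ?H = "H \<union> (\<lambda>c. {c, p}) ` L"
  let ?h = "attach_labels H h p x"
  note fresh = attach_leaves_fresh[OF p leaves]
  have "q \<in> nbrs H p"
    using p by blast
  then have qp: "{q, p} \<in> H"
    by simp
  have new: "?h {c, p} = x c" "?h {p, c} = x c" if "c \<in> L" for c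
  proof -
    have "c \<noteq> p"
      using that fresh(1) by blast
    then show "?h {c, p} = x c" "?h {p, c} = x c"
      using attach_labels_new[OF leaves[OF that]] by blast+
  qed
  have nbrs_p: "nbrs ?H p = insert q L"
    using nbrs_attach_leaves(1)[OF p leaves] .
  have "weight G ?H ?h p = ?h {q, p} \<otimes> finprod G (\<lambda>u. ?h {u, p}) L"
    unfolding weight_def nbrs_p
    using \<open>finite L\<close> fresh(2) qp h new x by (intro finprod_insert) (auto simp: attach_labels_def)
  also have "finprod G (\<lambda>u. ?h {u, p}) L = finprod G x L"
    using x new by (intro finprod_cong) auto
  finally show "weight G ?H ?h p = h {q, p} \<otimes> finprod G x L"
    using qp unfolding attach_labels_def by simp
  show "weight G ?H ?h c = x c" if "c \<in> L"
  proof -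
    have "x c \<in> carrier G"
      using x that by auto
    moreover have "nbrs ?H c = {p}"
      using nbrs_attach_leaves(2)[OF p leaves that] .
    ultimately show ?thesis
      unfolding weight_def using new[OF that] by simp
  qed
  show "weight G ?H ?h y = weight G H h y" if "y \<notin> insert p L"
  proof -
    have "nbrs ?H y = nbrs H y"
      using nbrs_attach_leaves(3)[OF p leaves that] .
    then show ?thesis
      unfolding weight_def using h by (intro finprod_cong) (auto simp: attach_labels_def)
  qed
qed

text \<open>Only the weight of \<open>p\<close> changes, so the new labels need only make it differ from the weights
  of the old neighbour \<open>q\<close> and of the new leaves.\<close>

lemma attach_labels_separates:
  assumes p: "nbrs H p = {q}" "p \<noteq> q" and leaves: "\<And>c. c \<in> L \<Longrightarrow> nbrs H c = {}" "finite L"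
    and h: "almost_good_labelling G H h" and x: "x \<in> L \<rightarrow> carrier G"
    and x_q: "h {q, p} \<otimes> finprod G x L \<noteq> weight G H h q"
    and x_leaf: "\<And>c. c \<in> L \<Longrightarrow> h {q, p} \<otimes> finprod G x L \<noteq> x c"
    and uv: "{u, v} \<in> H \<union> (\<lambda>c. {c, p}) ` L"
    and not_iso: "\<not> (nbrs (H \<union> (\<lambda>c. {c, p}) ` L) u = {v} \<and> nbrs (H \<union> (\<lambda>c. {c, p}) ` L) v = {u})"
  shows "weight G (H \<union> (\<lambda>c. {c, p}) ` L) (attach_labels H h p x) u \<noteq>
    weight G (H \<union> (\<lambda>c. {c, p}) ` L) (attach_labels H h p x) v"
proof -
  let ?H = "H \<union> (\<lambda>c. {c, p}) ` L"
  let ?w = "weight G ?H (attach_labels H h p x)"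
  have h_car: "\<And>e. e \<in> H \<Longrightarrow> h e \<in> carrier G"
    and h_wt: "\<And>u v. {u, v} \<in> H \<Longrightarrow> \<not> (nbrs H u = {v} \<and> nbrs H v = {u}) \<Longrightarrow>
      weight G H h u \<noteq> weight G H h v"
    using h unfolding almost_good_labelling_def by blast+
  note wt = weight_attach_labels[OF p(1) leaves h_car x]
  note fresh = attach_leaves_fresh[OF p(1) leaves(1)]
  show ?thesis
  proof (cases "{u, v} \<in> H")
    case False
    then obtain c where c: "c \<in> L" "{u, v} = {c, p}"
      using uv by blast
    have "x c \<noteq> h {q, p} \<otimes> finprod G x L"
      using x_leaf[OF c(1)] by metis
    then show ?thesis
      using c wt(1,2) by (auto simp: doubleton_eq_iff)
  next
    case True
    then have "v \<in> nbrs H u" "u \<in> nbrs H v"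
      by (simp_all add: insert_commute)
    then have "u \<notin> L" "v \<notin> L"
      using leaves by blast+
    consider (at_p) "p \<in> {u, v}" | (off_p) "p \<notin> {u, v}"
      by blast
    then show ?thesis
    proof cases
      case at_p
      have "u \<in> nbrs H p \<or> v \<in> nbrs H p"
        using at_p \<open>v \<in> nbrs H u\<close> \<open>u \<in> nbrs H v\<close> by auto
      then have "q \<in> {u, v}"
        using p(1) by (auto simp del: mem_nbrs)
      with at_p have "{u, v} = {p, q}"
        using p(2) by auto
      moreover have "?w q = weight G H h q"
        using wt(3)[where y = q] fresh(2) p(2) by simp
      moreover have "weight G H h q \<noteq> h {q, p} \<otimes> finprod G x L"
        using x_q by metis
      ultimately show ?thesis
        using wt(1) x_q by (auto simp: doubleton_eq_iff)
    next
      case off_p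
      then have "nbrs ?H u = nbrs H u" "nbrs ?H v = nbrs H v"
        using nbrs_attach_leaves(3)[OF p(1) leaves(1)] \<open>u \<notin> L\<close> \<open>v \<notin> L\<close> by auto
      then have "weight G H h u \<noteq> weight G H h v"
        using h_wt[OF True] not_iso by simp
      moreover have "?w u = weight G H h u" "?w v = weight G H h v"
        using wt(3)[where y = u] wt(3)[where y = v] off_p \<open>u \<notin> L\<close> \<open>v \<notin> L\<close> by auto
      ultimately show ?thesis
        by simp
    qed
  qed
qed

lemma almost_good_labelling_attach_leaves:
  assumes fin: "finite (carrier G)" "4 \<le> card (carrier G)" and L: "finite L" "c0 \<in> L"
    and p: "nbrs H p = {q}" "p \<noteq> q" and leaves: "\<And>c. c \<in> L \<Longrightarrow> nbrs H c = {}"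
    and h: "almost_good_labelling G H h"
  shows "\<exists>h'. almost_good_labelling G (H \<union> (\<lambda>c. {c, p}) ` L) h'"
proof -
  have h_lab: "\<And>e. e \<in> H \<Longrightarrow> h e \<in> carrier G - {\<one>}"
    using h unfolding almost_good_labelling_def by blast
  have "q \<in> nbrs H p"
    using p(1) by blast
  then have qp: "{q, p} \<in> H"
    by simp
  then have a: "h {q, p} \<in> carrier G" "h {q, p} \<noteq> \<one>"
    using h_lab by auto
  have B: "weight G H h q \<in> carrier G"
    using h_lab by (intro weight_closed) auto
  obtain x where x: "x \<in> L \<rightarrow> carrier G - {\<one>}"
    and x_q: "h {q, p} \<otimes> finprod G x L \<noteq> weight G H h q"
    and x_leaf: "\<And>c. c \<in> L \<Longrightarrow> h {q, p} \<otimes> finprod G x L \<noteq> x c"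
    using star_labelling[OF fin a B L] by blast
  have "x \<in> L \<rightarrow> carrier G"
    using x by blast
  note separates = attach_labels_separates[OF p leaves L(1) h this x_q x_leaf]
  let ?H = "H \<union> (\<lambda>c. {c, p}) ` L"
  have "almost_good_labelling G ?H (attach_labels H h p x)"
    unfolding almost_good_labelling_def
  proof (intro conjI ballI allI impI)
    show "attach_labels H h p x e \<in> carrier G - {\<one>}" if "e \<in> ?H" for e
      using attach_labels_mem[OF h_lab x leaves attach_leaves_fresh(1)[OF p(1) leaves] that] .
    show "weight G ?H (attach_labels H h p x) u \<noteq> weight G ?H (attach_labels H h p x) v"
      if "{u, v} \<in> ?H" "\<not> (nbrs ?H u = {v} \<and> nbrs ?H v = {u})" for u v
      by (rule separates) (use that in simp_all)
  qed
  then show ?thesis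
    by blast
qed

lemma forest_almost_good_labelling:
  assumes fin: "finite (carrier G)" "4 \<le> card (carrier G)"
  shows "finite H \<Longrightarrow> simple_edges H \<Longrightarrow> forest_edges H \<Longrightarrow> \<exists>h. almost_good_labelling G H h"
proof (induction "card H" arbitrary: H rule: less_induct)
  case less
  show ?case
  proof (cases "\<exists>x y z. y \<noteq> z \<and> y \<in> nbrs H x \<and> z \<in> nbrs H x")
    case False
    obtain g where g: "g \<in> carrier G" "g \<noteq> \<one>"
      using ex_avoiding_three[OF fin, of \<one> \<one> \<one>] by blast
    have "y = z" if "y \<in> nbrs H x" "z \<in> nbrs H x" for x y z
      using False that by blast
    then show ?thesis
      using almost_good_labelling_const[OF _ g] by metis
  next
    case True
    then obtain x y z where "y \<noteq> z" "y \<in> nbrs H x" "z \<in> nbrs H x"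
      by blast
    then obtain p q where q: "q \<in> nbrs H p" and "nbrs H p - {q} \<noteq> {}"
      and leaves: "\<forall>c\<in>nbrs H p - {q}. nbrs H c = {p}"
      by (metis forest_penultimate_vertex[OF less.prems])
    define L where "L = nbrs H p - {q}"
    define H' where "H' = H - (\<lambda>c. {c, p}) ` L"
    obtain c0 where "c0 \<in> L"
      using \<open>nbrs H p - {q} \<noteq> {}\<close> unfolding L_def by blast
    have pL: "nbrs H p = insert q L" "q \<notin> L"
      using q unfolding L_def by blast+
    have "\<And>c. c \<in> L \<Longrightarrow> nbrs H c = {p}"
      using leaves unfolding L_def by blast
    note detach = nbrs_detach_leaves[OF less.prems(2) pL this, folded H'_def]
    have "{c0, p} \<in> H - H'"
      using \<open>c0 \<in> L\<close> detach(1) unfolding H'_def by blast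
    then have smaller: "card H' < card H"
      using less.prems(1) unfolding H'_def by (intro psubset_card_mono) auto
    have "H' \<subseteq> H"
      unfolding H'_def by blast
    then obtain h' where h': "almost_good_labelling G H' h'"
      using less.hyps[OF smaller] finite_subset[OF _ less.prems(1)]
        simple_edges_subset[OF less.prems(2)] forest_edges_subset[OF less.prems(3)] by meson
    have "finite L"
      using finite_nbrs[OF less.prems(1)] unfolding L_def by blast
    moreover have "p \<noteq> q"
      using simple_edges_neq[OF less.prems(2)] q by (simp add: insert_commute)
    ultimately have "\<exists>h. almost_good_labelling G (H' \<union> (\<lambda>c. {c, p}) ` L) h"
      using almost_good_labelling_attach_leaves[OF fin _ \<open>c0 \<in> L\<close> detach(2) _ detach(3) h'] by blast
    then show ?thesis
      using detach(1) by simp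
  qed
qed

lemma forest_good_labelling:
  assumes "finite (carrier G)" "4 \<le> card (carrier G)"
    and "finite H" "simple_edges H" "forest_edges H" "\<not> has_isolated_edge H"
  shows "\<exists>h. good_labelling G H h"
  using forest_almost_good_labelling[OF assms(1-5)] good_labelling_if_almost_good[OF assms(6)]
  by blast

end

section \<open>Homomorphisms and products\<close>

lemma hom_finprod_comm_group:
  assumes G: "comm_group G" and K: "comm_group K" and \<phi>: "\<phi> \<in> hom G K"
    and f: "f \<in> A \<rightarrow> carrier G"
  shows "\<phi> (finprod G f A) = finprod K (\<lambda>x. \<phi> (f x)) A"
proof -
  interpret G: comm_group G by (rule G)
  interpret K: comm_group K by (rule K)
  have one: "\<phi> \<one>\<^bsub>G\<^esub> = \<one>\<^bsub>K\<^esub>"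
    using hom_one[OF \<phi> G.is_group K.is_group] .
  from f show ?thesis
  proof (induction A rule: infinite_finite_induct)
    case (insert b A)
    then have fb: "f b \<in> carrier G" and fA: "f \<in> A \<rightarrow> carrier G"
      by auto
    have "\<phi> (finprod G f (insert b A)) = \<phi> (f b \<otimes>\<^bsub>G\<^esub> finprod G f A)"
      using insert fb fA by simp
    also have "\<dots> = \<phi> (f b) \<otimes>\<^bsub>K\<^esub> finprod K (\<lambda>x. \<phi> (f x)) A"
      using \<phi> fb fA insert.IH by (simp add: hom_mult)
    also have "\<dots> = finprod K (\<lambda>x. \<phi> (f x)) (insert b A)"
      using insert fb fA \<phi> by (simp add: hom_in_carrier Pi_iff)
    finally show ?case .
  qed (use one in simp_all)
qed

lemma weight_hom:
  assumes "comm_group G" "comm_group K" "\<phi> \<in> hom G K"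
    and "\<And>u. u \<in> nbrs E v \<Longrightarrow> f {u, v} \<in> carrier G"
  shows "\<phi> (weight G E f v) = weight K E (\<phi> \<circ> f) v"
  unfolding weight_def using assms by (simp add: hom_finprod_comm_group Pi_iff)

lemma good_labelling_inj_hom:
  assumes G: "comm_group G" and K: "comm_group K" and \<phi>: "\<phi> \<in> hom G K" "inj_on \<phi> (carrier G)"
    and f: "good_labelling G E f"
  shows "good_labelling K E (\<phi> \<circ> f)"
proof -
  have lab: "f e \<in> carrier G" "f e \<noteq> \<one>\<^bsub>G\<^esub>" if "e \<in> E" for e
    using f that unfolding good_labelling_def by auto
  interpret G: comm_group G by (rule G)
  interpret K: comm_group K by (rule K)
  have one: "\<phi> \<one>\<^bsub>G\<^esub> = \<one>\<^bsub>K\<^esub>" "\<one>\<^bsub>G\<^esub> \<in> carrier G"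
    using hom_one[OF \<phi>(1) G.is_group K.is_group] by simp_all
  have "\<phi> (f e) \<in> carrier K - {\<one>\<^bsub>K\<^esub>}" if "e \<in> E" for e
    using lab[OF that] \<phi> one hom_in_carrier inj_on_contraD by fastforce
  moreover have "weight K E (\<phi> \<circ> f) u \<noteq> weight K E (\<phi> \<circ> f) v" if "{u, v} \<in> E" for u v
  proof -
    have wt: "weight K E (\<phi> \<circ> f) w = \<phi> (weight G E f w)" for w
      by (rule weight_hom[OF G K \<phi>(1), symmetric]) (use lab(1) in simp)
    have "weight G E f w \<in> carrier G" for w
      by (rule G.weight_closed) (use lab(1) in simp)
    show ?thesis
      using f that \<phi>(2) wt \<open>\<And>w. weight G E f w \<in> carrier G\<close>
      unfolding good_labelling_def inj_on_def by metis
  qed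
  ultimately show ?thesis
    unfolding good_labelling_def by auto
qed

lemma comm_group_product_group:
  assumes "\<And>i. i \<in> I \<Longrightarrow> comm_group (Gs i)"
  shows "comm_group (product_group I Gs)"
proof (rule group.group_comm_groupI)
  show "group (product_group I Gs)"
    using assms by (simp add: comm_group.axioms(2) comm_group_def)
  show "x \<otimes>\<^bsub>product_group I Gs\<^esub> y = y \<otimes>\<^bsub>product_group I Gs\<^esub> x"
    if "x \<in> carrier (product_group I Gs)" "y \<in> carrier (product_group I Gs)" for x y
    using that assms by (auto intro!: restrict_ext comm_monoid.m_comm simp: comm_group_def PiE_iff)
qed

lemma hom_product_group_component:
  "i \<in> I \<Longrightarrow> (\<lambda>x. x i) \<in> hom (product_group I Gs) (Gs i)"
  by (rule homI) auto

lemma (in comm_monoid) weight_extend_one: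
  assumes "finite E" "H \<subseteq> E" "\<And>u. u \<in> nbrs H v \<Longrightarrow> f {u, v} \<in> carrier G"
  shows "weight G E (\<lambda>e. if e \<in> H then f e else \<one>) v = weight G H f v"
  unfolding weight_def
proof (rule finprod_mono_neutral_cong_right)
  show "finite (nbrs E v)"
    using finite_nbrs[OF assms(1)] .
  show "nbrs H v \<subseteq> nbrs E v"
    using assms(2) by auto
qed (use assms(3) in auto)

lemma weight_product_group_component:
  assumes "finite E" and i: "i \<in> I" and Gs: "\<And>i. i \<in> I \<Longrightarrow> comm_group (Gs i)" and "H \<subseteq> E"
    and F: "\<And>e. F e \<in> carrier (product_group I Gs)"
    and F_i: "\<And>e. F e i = (if e \<in> H then f e else \<one>\<^bsub>Gs i\<^esub>)"
    and f: "\<And>e. e \<in> H \<Longrightarrow> f e \<in> carrier (Gs i)"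
  shows "weight (product_group I Gs) E F v i = weight (Gs i) H f v"
proof -
  interpret Gi: comm_group "Gs i"
    by (rule Gs[OF i])
  have P: "comm_group (product_group I Gs)"
    using Gs by (rule comm_group_product_group)
  have "weight (product_group I Gs) E F v i = weight (Gs i) E ((\<lambda>x. x i) \<circ> F) v"
    by (rule weight_hom[OF P Gs[OF i] hom_product_group_component[OF i]]) (rule F)
  also have "(\<lambda>x. x i) \<circ> F = (\<lambda>e. if e \<in> H then f e else \<one>\<^bsub>Gs i\<^esub>)"
    using F_i by auto
  also have "weight (Gs i) E \<dots> v = weight (Gs i) H f v"
    by (rule Gi.weight_extend_one[OF assms(1) \<open>H \<subseteq> E\<close>]) (use f in simp)
  finally show ?thesis .
qed

lemma good_labelling_product_group:
  assumes "finite E" and Gs: "\<And>i. i \<in> I \<Longrightarrow> comm_group (Gs i)"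
    and H: "\<And>i. i \<in> I \<Longrightarrow> H i \<subseteq> E" and f: "\<And>i. i \<in> I \<Longrightarrow> good_labelling (Gs i) (H i) (f i)"
    and cover: "\<And>e. e \<in> E \<Longrightarrow> \<exists>i\<in>I. e \<in> H i"
  shows "good_labelling (product_group I Gs) E (\<lambda>e. \<lambda>i\<in>I. if e \<in> H i then f i e else \<one>\<^bsub>Gs i\<^esub>)"
    (is "good_labelling ?P E ?F")
proof -
  have f_lab: "f i e \<in> carrier (Gs i)" "f i e \<noteq> \<one>\<^bsub>Gs i\<^esub>" if "i \<in> I" "e \<in> H i" for i e
    using f[OF that(1)] that(2) unfolding good_labelling_def by auto
  have "\<one>\<^bsub>Gs i\<^esub> \<in> carrier (Gs i)" if "i \<in> I" for i
    using Gs[OF that] by (metis comm_group.axioms(2) group.is_monoid monoid.one_closed)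
  then have F_car: "?F e \<in> carrier ?P" for e
    using f_lab by auto
  have coord: "weight ?P E ?F v i = weight (Gs i) (H i) (f i) v" if i: "i \<in> I" for i v
    using weight_product_group_component[OF assms(1) i Gs H[OF i] F_car] f_lab i by simp
  have "?F e \<noteq> \<one>\<^bsub>?P\<^esub>" if e: "e \<in> E" for e
  proof -
    obtain i where "i \<in> I" "e \<in> H i"
      using cover[OF e] by blast
    then have "?F e i \<noteq> \<one>\<^bsub>?P\<^esub> i"
      using f_lab by simp
    then show ?thesis
      by (rule contrapos_nn) simp
  qed
  moreover have "weight ?P E ?F u \<noteq> weight ?P E ?F v" if uv: "{u, v} \<in> E" for u v
  proof -
    obtain i where i: "i \<in> I" "{u, v} \<in> H i"
      using cover[OF uv] by blast
    then have "weight (Gs i) (H i) (f i) u \<noteq> weight (Gs i) (H i) (f i) v"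
      using f[OF i(1)] unfolding good_labelling_def by blast
    then have "weight ?P E ?F u i \<noteq> weight ?P E ?F v i"
      using coord[OF i(1)] by simp
    then show ?thesis
      by (rule contrapos_nn) simp
  qed
  ultimately show ?thesis
    using F_car unfolding good_labelling_def by blast
qed

section \<open>Abelian groups of squarefree order\<close>

definition torsion :: "('a, 'b) monoid_scheme \<Rightarrow> nat \<Rightarrow> 'a set" where
  "torsion G n = {x \<in> carrier G. x [^]\<^bsub>G\<^esub> n = \<one>\<^bsub>G\<^esub>}"

lemma (in group) eq_one_if_pow_prime_coprime:
  fixes p m :: nat
  assumes "x \<in> carrier G" "prime p" "x [^] p = \<one>" "x [^] m = \<one>" "\<not> p dvd m"
  shows "x = \<one>"
proof -
  have "ord x dvd p" "ord x dvd m"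
    using assms(1,3,4) pow_eq_id by auto
  then have "ord x = 1"
    using assms(2,5) by (metis prime_nat_iff)
  then show ?thesis
    using ord_eq_1[OF assms(1)] by simp
qed

lemma (in group) card_torsion_ge_prime:
  assumes "finite (carrier G)" "prime p" "p dvd order G"
  shows "p \<le> card (torsion G p)"
proof -
  obtain m where "order G = p ^ 1 * m"
    using assms(3) by auto
  then have "\<exists>H. subgroup H G \<and> card H = p ^ 1"
    by (rule sylow_thm[OF assms(2) is_group _ assms(1)])
  then obtain H where H: "subgroup H G" "card H = p"
    by auto
  interpret H: group "G\<lparr>carrier := H\<rparr>"
    using subgroup.subgroup_is_group[OF H(1) is_group] .
  have "H \<subseteq> torsion G p"
  proof
    fix y assume "y \<in> H"
    then have "y [^]\<^bsub>G\<lparr>carrier := H\<rparr>\<^esub> order (G\<lparr>carrier := H\<rparr>) = \<one>"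
      using H.pow_order_eq_1 by simp
    then have "y [^] p = \<one>"
      using H(2) unfolding order_def by (simp flip: nat_pow_consistent)
    moreover have "y \<in> carrier G"
      using \<open>y \<in> H\<close> H(1) subgroup.subset by blast
    ultimately show "y \<in> torsion G p"
      unfolding torsion_def by simp
  qed
  moreover have "finite (torsion G p)"
    using assms(1) unfolding torsion_def by simp
  ultimately show ?thesis
    using H(2) card_mono by fastforce
qed

context comm_group
begin

lemma subgroup_torsion: "subgroup (torsion G n) G"
  unfolding torsion_def
proof (rule subgroupI)
  fix x y assume "x \<in> {x \<in> carrier G. x [^] n = \<one>}" "y \<in> {x \<in> carrier G. x [^] n = \<one>}"
  then show "inv x \<in> {x \<in> carrier G. x [^] n = \<one>}" "x \<otimes> y \<in> {x \<in> carrier G. x [^] n = \<one>}"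
    by (simp_all add: nat_pow_inv pow_mult_distrib m_comm)
qed auto

lemma comm_group_torsion: "comm_group (G\<lparr>carrier := torsion G n\<rparr>)"
proof (rule group.group_comm_groupI)
  show "group (G\<lparr>carrier := torsion G n\<rparr>)"
    using subgroup.subgroup_is_group[OF subgroup_torsion is_group] .
qed (simp add: torsion_def m_comm)

lemma pow_hom: "(\<lambda>x. x [^] (n::nat)) \<in> hom G G"
  by (rule homI) (simp_all add: pow_mult_distrib m_comm)

text \<open>Raising to the power \<open>m = (\<Prod>i\<in>I - {j}. p i)\<close> kills every factor but \<open>y j\<close>, and
  \<open>p j\<close> does not divide \<open>m\<close>.\<close>

lemma torsion_independent:
  assumes I: "finite I" and p: "\<And>i. i \<in> I \<Longrightarrow> prime (p i)" "inj_on p I"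
    and y: "\<And>i. i \<in> I \<Longrightarrow> y i \<in> torsion G (p i)" and prod: "finprod G y I = \<one>" and j: "j \<in> I"
  shows "y j = \<one>"
proof -
  define m where "m = (\<Prod>i\<in>I - {j}. p i)"
  have y_car: "y i \<in> carrier G" and y_pow: "y i [^] p i = \<one>" if "i \<in> I" for i
    using y[OF that] unfolding torsion_def by auto
  have "\<not> p j dvd m"
  proof
    assume "p j dvd m"
    then obtain i where "i \<in> I - {j}" "p j dvd p i"
      unfolding m_def using prime_dvd_prod_iff[of "I - {j}" "p j" p] I p(1)[OF j] by auto
    then have "p j = p i"
      using primes_dvd_imp_eq p(1) j by blast
    with \<open>i \<in> I - {j}\<close> j p(2) show False
      by (auto dest: inj_onD)
  qed
  have killed: "y i [^] m = \<one>" if "i \<in> I - {j}" for i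
  proof -
    have "ord (y i) dvd p i" "p i dvd m"
      using that y_car y_pow pow_eq_id I unfolding m_def by (auto intro: dvd_prodI)
    then show ?thesis
      using that y_car pow_eq_id by (meson DiffD1 dvd_trans)
  qed
  have "\<one> = finprod G y I [^] m"
    using prod by simp
  also have "\<dots> = finprod G (\<lambda>i. y i [^] m) I"
    by (rule hom_finprod_comm_group[OF comm_group_axioms comm_group_axioms pow_hom])
      (use y_car in auto)
  also have "\<dots> = finprod G (\<lambda>i. if i = j then y i [^] m else \<one>) I"
    using killed y_car by (intro finprod_cong') auto
  also have "\<dots> = y j [^] m"
    using finprod_singleton_swap[OF j I] y_car by simp
  finally show ?thesis
    using eq_one_if_pow_prime_coprime[OF y_car[OF j] p(1)[OF j] y_pow[OF j] _ \<open>\<not> p j dvd m\<close>]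
    by simp
qed

lemma hom_finprod_product_group:
  assumes "\<And>i. i \<in> I \<Longrightarrow> S i \<subseteq> carrier G"
  shows "(\<lambda>y. finprod G y I) \<in> hom (product_group I (\<lambda>i. G\<lparr>carrier := S i\<rparr>)) G"
proof (rule homI)
  let ?P = "product_group I (\<lambda>i. G\<lparr>carrier := S i\<rparr>)"
  have car: "y \<in> I \<rightarrow> carrier G" if "y \<in> carrier ?P" for y
    using that assms by auto
  then show "finprod G y I \<in> carrier G" if "y \<in> carrier ?P" for y
    using that by simp
  fix x y assume "x \<in> carrier ?P" "y \<in> carrier ?P"
  then have "x \<in> I \<rightarrow> carrier G" "y \<in> I \<rightarrow> carrier G"
    using car by blast+
  moreover have "finprod G (x \<otimes>\<^bsub>?P\<^esub> y) I = finprod G (\<lambda>i. x i \<otimes> y i) I"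
    using calculation by (intro finprod_cong') auto
  ultimately show "finprod G (x \<otimes>\<^bsub>?P\<^esub> y) I = finprod G x I \<otimes> finprod G y I"
    by simp
qed

text \<open>Multiplying the coordinates is an injective homomorphism from the product into \<open>G\<close>, and the
  product has at least as many elements as \<open>G\<close>.\<close>

lemma iso_product_torsion:
  assumes fin: "finite (carrier G)" and I: "finite I" and p: "\<And>i. i \<in> I \<Longrightarrow> prime (p i)" "inj_on p I"
    and order: "order G = (\<Prod>i\<in>I. p i)"
  shows "G \<cong> product_group I (\<lambda>i. G\<lparr>carrier := torsion G (p i)\<rparr>)"
proof -
  let ?P = "product_group I (\<lambda>i. G\<lparr>carrier := torsion G (p i)\<rparr>)"
  let ?mult = "\<lambda>y. finprod G y I"
  have group_P: "group ?P"
    using comm_group_torsion by (simp add: comm_group.axioms(2) comm_group_def)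
  have hom: "?mult \<in> hom ?P G"
    by (rule hom_finprod_product_group) (auto simp: torsion_def)
  have inj: "inj_on ?mult (carrier ?P)"
    unfolding inj_on_one_iff'[OF hom group_P is_group]
  proof (intro allI impI)
    fix y assume y: "y \<in> carrier ?P" and "?mult y = \<one>"
    then have "y j = \<one>" if "j \<in> I" for j
      using torsion_independent[OF I p _ _ that] by auto
    with y show "y = \<one>\<^bsub>?P\<^esub>"
      by (auto simp: PiE_iff extensional_def)
  qed
  have "card (carrier G) \<le> card (carrier ?P)"
  proof -
    have "p i \<le> card (torsion G (p i))" if "i \<in> I" for i
      using card_torsion_ge_prime[OF fin p(1)[OF that]] order I that by (simp add: dvd_prodI)
    then have "(\<Prod>i\<in>I. p i) \<le> (\<Prod>i\<in>I. card (torsion G (p i)))"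
      by (simp add: prod_mono)
    then show ?thesis
      using order I by (simp add: order_def card_PiE)
  qed
  then have "card (carrier G) \<le> card (?mult ` carrier ?P)"
    using card_image[OF inj] by simp
  moreover have "?mult ` carrier ?P \<subseteq> carrier G"
    using hom by (auto simp: hom_def)
  ultimately have "?mult ` carrier ?P = carrier G"
    using card_seteq[OF fin] by blast
  with inj have "?mult \<in> iso ?P G"
    using hom unfolding iso_def bij_betw_def by blast
  then show ?thesis
    using group.iso_sym[OF group_P] unfolding is_iso_def by blast
qed

end

lemma decomposable_order_prod_primes:
  assumes p: "\<And>i. i < a \<Longrightarrow> prime (p i) \<and> 4 \<le> p i" and inj: "inj_on p {..<a}"
  shows "decomposable_order a (\<Prod>i<a. p i)"
  unfolding decomposable_order_def
proof (intro allI impI)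
  fix G :: "nat monoid"
  assume G: "comm_group G \<and> finite (carrier G) \<and> card (carrier G) = (\<Prod>i<a. p i)"
  then interpret comm_group G
    by blast
  let ?Gs = "\<lambda>i. G\<lparr>carrier := torsion G (p i)\<rparr>"
  have "G \<cong> product_group {..<a} ?Gs"
    using G p inj by (intro iso_product_torsion) (auto simp: order_def)
  moreover have "comm_group (?Gs i) \<and> 4 \<le> card (carrier (?Gs i))" if "i < a" for i
  proof -
    have "p i dvd order G"
      using G that by (simp add: order_def dvd_prodI)
    then have "p i \<le> card (torsion G (p i))"
      using card_torsion_ge_prime G p[OF that] by blast
    then show ?thesis
      using comm_group_torsion p[OF that] by simp
  qed
  ultimately show "\<exists>Gs :: nat \<Rightarrow> nat monoid. (\<forall>i<a. comm_group (Gs i) \<and> 4 \<le> card (carrier (Gs i))) \<and>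
      G \<cong> product_group {..<a} Gs"
    by (intro exI[of _ ?Gs]) blast
qed

text \<open>The witness is the product of the \<open>a\<close> smallest primes above 3.\<close>

lemma k_of_decomposable: "0 < k_of a \<and> decomposable_order a (k_of a)"
proof -
  define p where "p = enumerate {p :: nat. prime p \<and> 4 \<le> p}"
  have "\<exists>q>m. q \<in> {p. prime p \<and> 4 \<le> p}" for m :: nat
  proof -
    obtain q where "prime q" "m + 4 < q"
      using bigger_prime by blast
    then show ?thesis
      by (intro exI[of _ q]) auto
  qed
  then have inf: "infinite {p :: nat. prime p \<and> 4 \<le> p}"
    unfolding infinite_nat_iff_unbounded by blast
  have primes: "prime (p i) \<and> 4 \<le> p i" for i
    unfolding p_def using enumerate_in_set[OF inf] by simp
  have "inj_on p {..<a}"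
    unfolding p_def using inj_enumerate[OF inf] by (rule inj_on_subset) simp
  then have "decomposable_order a (\<Prod>i<a. p i)"
    by (rule decomposable_order_prod_primes[OF primes])
  moreover have "0 < (\<Prod>i<a. p i)"
    using primes by (simp add: prime_gt_0_nat)
  ultimately have "0 < (\<Prod>i<a. p i) \<and> decomposable_order a (\<Prod>i<a. p i)"
    by blast
  then show ?thesis
    unfolding k_of_def by (rule LeastI)
qed

lemma good_labelling_if_forest_cover:
  assumes "finite E" "simple_edges E"
    and H: "\<forall>i<a. H i \<subseteq> E \<and> forest_edges (H i) \<and> \<not> has_isolated_edge (H i)"
    and cover: "\<forall>e\<in>E. \<exists>i<a. e \<in> H i"
    and G: "comm_group G" "G \<cong> product_group {..<a} Gs"
    and Gs: "\<forall>i<a. comm_group (Gs i) \<and> 4 \<le> card (carrier (Gs i))"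
  shows "\<exists>f. good_labelling G E f"
proof -
  let ?P = "product_group {..<a} Gs"
  have "\<exists>f. good_labelling (Gs i) (H i) f" if i: "i < a" for i
  proof -
    interpret Gi: comm_group "Gs i"
      using Gs i by blast
    have card: "4 \<le> card (carrier (Gs i))"
      using Gs i by blast
    then have "finite (carrier (Gs i))"
      using card.infinite by force
    moreover have "finite (H i)"
      using H i assms(1) finite_subset by blast
    moreover have "simple_edges (H i)"
      using H i simple_edges_subset[OF assms(2)] by blast
    moreover have "forest_edges (H i)" "\<not> has_isolated_edge (H i)"
      using H i by blast+
    ultimately show ?thesis
      using Gi.forest_good_labelling card by blast
  qed
  then have "\<forall>i. \<exists>f. i < a \<longrightarrow> good_labelling (Gs i) (H i) f"
    by blast
  from choice[OF this] obtain f where "\<forall>i. i < a \<longrightarrow> good_labelling (Gs i) (H i) (f i)"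
    by blast
  then have "good_labelling ?P E (\<lambda>e. \<lambda>i\<in>{..<a}. if e \<in> H i then f i e else \<one>\<^bsub>Gs i\<^esub>)"
    (is "good_labelling ?P E ?F")
    using Gs H cover by (intro good_labelling_product_group[OF assms(1)]) auto
  moreover obtain \<phi> where "\<phi> \<in> iso G ?P"
    using G(2) unfolding is_iso_def by blast
  then have "inv_into (carrier G) \<phi> \<in> iso ?P G"
    by (rule group.iso_set_sym[OF comm_group.axioms(2)[OF G(1)]])
  moreover have "comm_group ?P"
    using Gs by (intro comm_group_product_group) auto
  ultimately have "good_labelling G E (inv_into (carrier G) \<phi> \<circ> ?F)"
    using G(1) by (intro good_labelling_inj_hom) (auto simp: iso_def bij_betw_def)
  then show ?thesis
    by blast
qed

theorem corollary6:
  fixes V :: "'v set" and E :: "'v set set" and a :: nat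
  assumes "simple_graph V E"
    and "0 < a"
    and "arboricity E \<le> a"
    and "\<not> has_isolated_edge E"
  shows "(\<exists>k>0. group_sum_prop E k) \<and> chi_sigma_g_star E \<le> k_of a"
proof -
  have E: "finite E" "simple_edges E"
    using assms(1) by (simp_all add: simple_graph_imp_finite simple_graph_imp_simple_edges)
  then obtain H where H: "\<forall>i<a. H i \<subseteq> E \<and> forest_edges (H i) \<and> \<not> has_isolated_edge (H i)"
    and cover: "\<forall>e\<in>E. \<exists>i<a. e \<in> H i"
    using forest_cover_no_isolated_edge[OF E assms(4,3)] by blast
  have "group_sum_prop E (k_of a)"
    unfolding group_sum_prop_def
  proof (intro allI impI)
    fix G :: "nat monoid"
    assume G: "comm_group G \<and> finite (carrier G) \<and> card (carrier G) = k_of a"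
    then obtain Gs :: "nat \<Rightarrow> nat monoid" where
      "\<forall>i<a. comm_group (Gs i) \<and> 4 \<le> card (carrier (Gs i))" "G \<cong> product_group {..<a} Gs"
      using k_of_decomposable[of a, THEN conjunct2, unfolded decomposable_order_def, rule_format] by blast
    then show "\<exists>f. good_labelling G E f"
      using good_labelling_if_forest_cover[OF E H cover] G by blast
  qed
  then show ?thesis
    using k_of_decomposable[of a] unfolding chi_sigma_g_star_def by (auto intro: Least_le)
qed

end
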